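(* For every institution $s$, the aggregate choice rule $\mathcal{C}^h_s$ is fair: for every $Y\subseteq X$ and every $x\in Y_s$ with $\mathbf{i}(x)\notin\mathbf{i}(\mathcal{C}^h_s(Y))$, every $y\in\mathcal{C}^h_s(Y)$ satisfies at least one of: (1) $\mathbf{i}(y)\succ_{s}\mathbf{i}(x)$; (2) $\mathbf{t}(x)\neq\mathbf{t}(y)$; (3) $\rho(\mathbf{i}(y))\setminus\rho(\mathbf{i}(x))\neq\emptyset$.
   Context: Model. $I$ finite set of individuals, $S$ finite set of institutions. Reserve categories $R=\{SC,ST,OBC,EWS\}$, position types $V=\{o\}\cup R$ ($o$ = open category). Institution $s$ has $q_s^r$ positions reserved for $r\in R$ and $q_s^o$ open positions. Individual $i$ has vertical membership $t(i)\in R\cup\{g\}$ ($g$ = general). Institution $s$ has a strict merit ranking $\succ_s$ of $I$. Contracts $X$: triples $(i,s,v)$ with $v=o$, or $v=t(i)$ if $t(i)\in R$; $\mathbf{i}(x),\mathbf{s}(x),\mathbf{t}(x)$ denote individual, institution, category; $Y_s=\{x\in Y:\mathbf{s}(x)=s\}$, $\mathbf{i}(Y)=\{\mathbf{i}(x):x\in Y\}$. $H=\{h_1,\dots,h_L\}$ horizontal types, $\rho(i)\subseteq H$ types of $i$, $\rho^{-1}(h)=\{i:h\in\rho(i)\}$; hierarchical: if $\rho^{-1}(h)\cap\rho^{-1}(h')\neq\emptyset$ then one of $\rho^{-1}(h),\rho^{-1}(h')$ is a strict subset of the other ($h$ contains $h'$ if $\rho^{-1}(h')\subsetneq\rho^{-1}(h)$).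 For each $s$ and $v\in V$, $\kappa^s_v=(\kappa^s_{v,j})_{j}\in\mathbb{Z}_+^L$ are horizontal reservations within category $v$ at $s$; a chosen individual counts against every type she has. Hierarchical choice rule $C^h(A,\kappa,\rho)$ with capacity $q$ and ranking $\succ$: Step 1: let $H^1$ be the types containing no other type. If no individual in $A$ has a horizontal type, choose the $\min(q,|A|)$ highest-ranked and stop. Otherwise for each $h_j\in H^1$ (in a fixed order, not exceeding remaining positions) choose all not-yet-chosen type-$h_j$ individuals of $A$ if at most $\kappa_j$, else the $\kappa_j$ highest-ranked; reduce remaining positions and the reservation of each type containing $h_j$ by the number chosen (floored at 0); remove $h_j$. Step $n\ge2$: stop if no positions or individuals remain; if no type remains, fill remaining positions with the highest-ranked remaining individuals and stop; otherwise process the remaining types containing no other remaining type as in Step 1 with updated reservations. Output: all individuals chosen. Aggregate choice rule $\mathcal{C}^h_s$: given $Y\subseteq X$, categories are processed in the order $o,SC,ST,OBC,EWS$. For category $v$, let $A_v$ be the set of individuals who have a contract $(i,s,v)\in Y$ and who were not chosen by any earlier category; apply $C^h(A_v,\kappa^s_v,\rho)$ with capacity $q_s^v$ and ranking $\succ_s$, and select the contracts $(i,s,v)$ of the chosen individuals. $\mathcal{C}^h_s(Y)$ is the union of the selected contracts over all categories. *)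

theory Defs
  imports Main
begin

datatype rcat = SC | ST | OBC | EWS
datatype vmem = Reserved rcat | General        (* vertical membership t(i) in R \<union> {g} *)
datatype pos = Open | Res rcat                 (* position types V = {o} \<union> R *)

type_synonym ('i, 's) contract = "'i \<times> 's \<times> pos"

definition ind :: "('i, 's) contract \<Rightarrow> 'i" where "ind x = fst x"
definition inst :: "('i, 's) contract \<Rightarrow> 's" where "inst x = fst (snd x)"
definition cat :: "('i, 's) contract \<Rightarrow> pos" where "cat x = snd (snd x)"

definition contracts :: "'i set \<Rightarrow> 's set \<Rightarrow> ('i \<Rightarrow> vmem) \<Rightarrow> ('i, 's) contract set" where
  "contracts I S t = {(i, s, v). i \<in> I \<and> s \<in> S \<and>
      (v = Open \<or> (\<exists>r. v = Res r \<and> t i = Reserved r))}"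

text \<open>succ a b means a is ranked strictly higher than b; a strict total order on I.\<close>
definition strict_ranking :: "'i set \<Rightarrow> ('i \<Rightarrow> 'i \<Rightarrow> bool) \<Rightarrow> bool" where
  "strict_ranking I succ \<longleftrightarrow>
     (\<forall>a\<in>I. \<not> succ a a) \<and>
     (\<forall>a\<in>I. \<forall>b\<in>I. \<forall>c\<in>I. succ a b \<longrightarrow> succ b c \<longrightarrow> succ a c) \<and>
     (\<forall>a\<in>I. \<forall>b\<in>I. a \<noteq> b \<longrightarrow> succ a b \<or> succ b a)"

definition best :: "('i \<Rightarrow> 'i \<Rightarrow> bool) \<Rightarrow> 'i set \<Rightarrow> 'i" where
  "best succ A = (THE m. m \<in> A \<and> (\<forall>a\<in>A. a \<noteq> m \<longrightarrow> succ m a))"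

fun top :: "('i \<Rightarrow> 'i \<Rightarrow> bool) \<Rightarrow> nat \<Rightarrow> 'i set \<Rightarrow> 'i set" where
  "top succ 0 A = {}"
| "top succ (Suc n) A =
     (if A = {} then {} else insert (best succ A) (top succ n (A - {best succ A})))"

definition type_pre :: "'i set \<Rightarrow> ('i \<Rightarrow> 'h set) \<Rightarrow> 'h \<Rightarrow> 'i set" where
  "type_pre I \<rho> h = {i \<in> I. h \<in> \<rho> i}"

definition contains :: "'i set \<Rightarrow> ('i \<Rightarrow> 'h set) \<Rightarrow> 'h \<Rightarrow> 'h \<Rightarrow> bool" where
  "contains I \<rho> h h' \<longleftrightarrow> type_pre I \<rho> h' \<subset> type_pre I \<rho> h"

definition hierarchical :: "'i set \<Rightarrow> ('i \<Rightarrow> 'h set) \<Rightarrow> 'h set \<Rightarrow> bool" where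
  "hierarchical I \<rho> H \<longleftrightarrow>
     (\<forall>h\<in>H. \<forall>h'\<in>H. h \<noteq> h' \<longrightarrow> type_pre I \<rho> h \<inter> type_pre I \<rho> h' \<noteq> {} \<longrightarrow>
        type_pre I \<rho> h \<subset> type_pre I \<rho> h' \<or> type_pre I \<rho> h' \<subset> type_pre I \<rho> h)"

text \<open>State: (chosen individuals, remaining positions, current reservations).
  Processing one type h: choose the (at most k h, at most remaining positions)
  highest-ranked not-yet-chosen type-h individuals; update positions and the
  reservations of every type containing h (truncated subtraction = floor at 0).\<close>
definition process_type ::
  "'i set \<Rightarrow> ('i \<Rightarrow> 'h set) \<Rightarrow> ('i \<Rightarrow> 'i \<Rightarrow> bool) \<Rightarrow> 'i set \<Rightarrow> 'h
   \<Rightarrow> 'i set \<times> nat \<times> ('h \<Rightarrow> nat) \<Rightarrow> 'i set \<times> nat \<times> ('h \<Rightarrow> nat)" where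
  "process_type I \<rho> succ A h st = (case st of (C, q, k) \<Rightarrow>
     (let B = top succ (min (k h) q) {a \<in> A - C. h \<in> \<rho> a}; c = card B
      in (C \<union> B, q - c, \<lambda>h'. if contains I \<rho> h' h then k h' - c else k h')))"

definition level :: "'i set \<Rightarrow> ('i \<Rightarrow> 'h set) \<Rightarrow> 'h set \<Rightarrow> 'h set" where
  "level I \<rho> R = {h \<in> R. \<not> (\<exists>h'\<in>R. contains I \<rho> h h')}"

definition hier_step ::
  "'i set \<Rightarrow> ('i \<Rightarrow> 'h set) \<Rightarrow> 'h list \<Rightarrow> ('i \<Rightarrow> 'i \<Rightarrow> bool) \<Rightarrow> 'i set
   \<Rightarrow> ('i set \<times> nat \<times> ('h \<Rightarrow> nat)) \<times> 'h set \<Rightarrow> ('i set \<times> nat \<times> ('h \<Rightarrow> nat)) \<times> 'h set" where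
  "hier_step I \<rho> hs succ A sr = (case sr of (st, R) \<Rightarrow>
     (let L = level I \<rho> R in (fold (process_type I \<rho> succ A) (filter (\<lambda>h. h \<in> L) hs) st, R - L)))"

text \<open>Steps n \<ge> 2 (with fuel; the fuel given below always suffices).\<close>
fun hier_loop ::
  "nat \<Rightarrow> 'i set \<Rightarrow> ('i \<Rightarrow> 'h set) \<Rightarrow> 'h list \<Rightarrow> ('i \<Rightarrow> 'i \<Rightarrow> bool) \<Rightarrow> 'i set
   \<Rightarrow> ('i set \<times> nat \<times> ('h \<Rightarrow> nat)) \<times> 'h set \<Rightarrow> 'i set" where
  "hier_loop 0 I \<rho> hs succ A sr = fst (fst sr)"
| "hier_loop (Suc n) I \<rho> hs succ A sr = (case sr of ((C, q, k), R) \<Rightarrow>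
     (if q = 0 \<or> A - C = {} then C
      else if R = {} then C \<union> top succ q (A - C)
      else hier_loop n I \<rho> hs succ A (hier_step I \<rho> hs succ A sr)))"

text \<open>C^h(A, kappa, rho) with capacity q and ranking succ; H = set hs with fixed order hs.\<close>
definition choice_h ::
  "'i set \<Rightarrow> ('i \<Rightarrow> 'h set) \<Rightarrow> 'h list \<Rightarrow> ('i \<Rightarrow> 'i \<Rightarrow> bool) \<Rightarrow> nat \<Rightarrow> ('h \<Rightarrow> nat)
   \<Rightarrow> 'i set \<Rightarrow> 'i set" where
  "choice_h I \<rho> hs succ q \<kappa> A =
     (if \<forall>a\<in>A. \<rho> a = {} then top succ q A
      else hier_loop (Suc (length hs)) I \<rho> hs succ A
             (hier_step I \<rho> hs succ A (({}, q, \<kappa>), set hs)))"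

definition cat_order :: "pos list" where
  "cat_order = [Open, Res SC, Res ST, Res OBC, Res EWS]"

definition agg_step ::
  "'i set \<Rightarrow> ('i \<Rightarrow> 'h set) \<Rightarrow> 'h list \<Rightarrow> ('s \<Rightarrow> 'i \<Rightarrow> 'i \<Rightarrow> bool) \<Rightarrow> ('s \<Rightarrow> pos \<Rightarrow> nat)
   \<Rightarrow> ('s \<Rightarrow> pos \<Rightarrow> 'h \<Rightarrow> nat) \<Rightarrow> 's \<Rightarrow> ('i, 's) contract set \<Rightarrow> pos
   \<Rightarrow> 'i set \<times> ('i, 's) contract set \<Rightarrow> 'i set \<times> ('i, 's) contract set" where
  "agg_step I \<rho> hs succ q \<kappa> s Y v DZ = (case DZ of (D, Z) \<Rightarrow>
     (let A = {i. (i, s, v) \<in> Y} - D;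
          Ch = choice_h I \<rho> hs (succ s) (q s v) (\<kappa> s v) A
      in (D \<union> Ch, Z \<union> {(i, s, v) | i. i \<in> Ch})))"

definition agg_choice ::
  "'i set \<Rightarrow> ('i \<Rightarrow> 'h set) \<Rightarrow> 'h list \<Rightarrow> ('s \<Rightarrow> 'i \<Rightarrow> 'i \<Rightarrow> bool) \<Rightarrow> ('s \<Rightarrow> pos \<Rightarrow> nat)
   \<Rightarrow> ('s \<Rightarrow> pos \<Rightarrow> 'h \<Rightarrow> nat) \<Rightarrow> 's \<Rightarrow> ('i, 's) contract set \<Rightarrow> ('i, 's) contract set" where
  "agg_choice I \<rho> hs succ q \<kappa> s Y =
     snd (fold (agg_step I \<rho> hs succ q \<kappa> s Y) cat_order ({}, {}))"

end

theory Submission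
  imports Defs
begin

text \<open>Every selection made by the hierarchical choice rule takes the highest-ranked members of a
  pool of not-yet-chosen applicants, and that pool is either all of them or all of those having a
  type h. If j is selected and i is not, with \<open>\<rho> j \<subseteq> \<rho> i\<close>, then i has every type of j, so i sat
  in the pool from which j was selected and was passed over: j ranks above i. In the aggregate
  rule, an applicant x for category v who is never chosen was still available when v was
  processed, so the same argument applies to everyone chosen for v. Neither the hierarchy of the
  types nor the order in which they are processed plays any role.\<close>

lemma strict_ranking_best:
  assumes ranking: "strict_ranking I succ" and "finite X" "X \<noteq> {}" "X \<subseteq> I"
  shows "best succ X \<in> X \<and> (\<forall>a\<in>X. a \<noteq> best succ X \<longrightarrow> succ (best succ X) a)"
proof -
  define r where "r = {(a, b). a \<in> X \<and> b \<in> X \<and> succ a b}"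
  have "trans r" "irrefl r"
    using ranking \<open>X \<subseteq> I\<close> unfolding r_def strict_ranking_def trans_def irrefl_def by blast+
  then have "acyclic r"
    by (simp add: acyclic_irrefl)
  moreover have "r \<subseteq> X \<times> X"
    unfolding r_def by auto
  then have "finite r"
    using \<open>finite X\<close> finite_subset by blast
  ultimately have "wf r"
    by (rule finite_acyclic_wf[rotated])
  then obtain m where "m \<in> X" and "\<And>a. (a, m) \<in> r \<Longrightarrow> a \<notin> X"
    using \<open>X \<noteq> {}\<close> wfE_min' by metis
  then have unbeaten: "\<not> succ a m" if "a \<in> X" for a
    using that unfolding r_def by blast
  have "m' \<in> X \<and> (\<forall>a\<in>X. a \<noteq> m' \<longrightarrow> succ m' a) \<longleftrightarrow> m' = m" for m'
  proof
    assume "m' \<in> X \<and> (\<forall>a\<in>X. a \<noteq> m' \<longrightarrow> succ m' a)"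
    then show "m' = m"
      using \<open>m \<in> X\<close> unbeaten by metis
  next
    assume "m' = m"
    then show "m' \<in> X \<and> (\<forall>a\<in>X. a \<noteq> m' \<longrightarrow> succ m' a)"
      using ranking \<open>m \<in> X\<close> \<open>X \<subseteq> I\<close> unbeaten unfolding strict_ranking_def by blast
  qed
  then show ?thesis
    unfolding best_def by simp
qed

lemma top_subset:
  assumes ranking: "strict_ranking I succ" and "finite X" "X \<subseteq> I"
  shows "top succ n X \<subseteq> X"
  using assms(2,3)
proof (induction n arbitrary: X)
  case (Suc n)
  show ?case
  proof (cases "X = {}")
    case False
    then have "best succ X \<in> X"
      using strict_ranking_best[OF ranking Suc.prems(1) _ Suc.prems(2)] by blast
    moreover have "top succ n (X - {best succ X}) \<subseteq> X - {best succ X}"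
      using Suc.prems by (intro Suc.IH) auto
    ultimately show ?thesis
      using False by auto
  qed simp
qed simp

lemma top_ranked_above:
  assumes ranking: "strict_ranking I succ" and "finite X" "X \<subseteq> I"
    and "j \<in> top succ n X" "i \<in> X - top succ n X"
  shows "succ j i"
  using assms(2-)
proof (induction n arbitrary: X)
  case (Suc n)
  then have "X \<noteq> {}"
    by auto
  let ?b = "best succ X"
  have b: "?b \<in> X" "\<forall>a\<in>X. a \<noteq> ?b \<longrightarrow> succ ?b a"
    using strict_ranking_best[OF ranking Suc.prems(1) \<open>X \<noteq> {}\<close> Suc.prems(2)] by auto
  have top_Suc: "top succ (Suc n) X = insert ?b (top succ n (X - {?b}))"
    using \<open>X \<noteq> {}\<close> by simp
  show ?case
  proof (cases "j = ?b")
    case True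
    then show ?thesis
      using b Suc.prems(4) unfolding top_Suc by blast
  next
    case False
    then show ?thesis
      using Suc.prems Suc.IH[of "X - {?b}"] unfolding top_Suc by blast
  qed
qed simp

definition no_justified_envy ::
  "('i \<Rightarrow> 'h set) \<Rightarrow> ('i \<Rightarrow> 'i \<Rightarrow> bool) \<Rightarrow> 'i set \<Rightarrow> 'i set \<Rightarrow> bool" where
  "no_justified_envy \<rho> succ A C \<longleftrightarrow> (\<forall>j\<in>C. \<forall>i\<in>A - C. \<rho> j \<subseteq> \<rho> i \<longrightarrow> succ j i)"

context
  fixes I :: "'i set" and succ :: "'i \<Rightarrow> 'i \<Rightarrow> bool" and A :: "'i set"
  assumes ranking: "strict_ranking I succ" and finite_A: "finite A" and A_subset: "A \<subseteq> I"
begin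

lemma no_justified_envy_top:
  assumes "no_justified_envy \<rho> succ A C"
  shows "no_justified_envy \<rho> succ A (C \<union> top succ n (A - C))"
  using assms top_subset[OF ranking, of "A - C"] top_ranked_above[OF ranking, of "A - C"]
    finite_A A_subset
  unfolding no_justified_envy_def by blast

lemma no_justified_envy_process_type:
  assumes "no_justified_envy \<rho> succ A (fst st)"
  shows "no_justified_envy \<rho> succ A (fst (process_type I \<rho> succ A h st))"
proof -
  obtain C q k where st: "st = (C, q, k)"
    by (cases st)
  define pool where "pool = {a \<in> A - C. h \<in> \<rho> a}"
  define B where "B = top succ (min (k h) q) pool"
  have pool: "finite pool" "pool \<subseteq> I"
    using finite_A A_subset unfolding pool_def by auto
  have "no_justified_envy \<rho> succ A (C \<union> B)"
    unfolding no_justified_envy_def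
  proof (intro ballI impI)
    fix j i
    assume j: "j \<in> C \<union> B" and i: "i \<in> A - (C \<union> B)" and "\<rho> j \<subseteq> \<rho> i"
    show "succ j i"
    proof (cases "j \<in> C")
      case True
      then show ?thesis
        using assms i \<open>\<rho> j \<subseteq> \<rho> i\<close> unfolding st no_justified_envy_def by auto
    next
      case False
      then have "j \<in> B" "j \<in> pool"
        using j top_subset[OF ranking pool] unfolding B_def by auto
      with i \<open>\<rho> j \<subseteq> \<rho> i\<close> have "i \<in> pool - B"
        unfolding pool_def by auto
      with \<open>j \<in> B\<close> show ?thesis
        using top_ranked_above[OF ranking pool] unfolding B_def by blast
    qed
  qed
  then show ?thesis
    unfolding st process_type_def Let_def pool_def B_def by simp
qed

lemma no_justified_envy_hier_step:
  assumes "no_justified_envy \<rho> succ A (fst (fst sr))"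
  shows "no_justified_envy \<rho> succ A (fst (fst (hier_step I \<rho> hs succ A sr)))"
proof -
  obtain st R where sr: "sr = (st, R)"
    by (cases sr)
  have "no_justified_envy \<rho> succ A (fst (fold (process_type I \<rho> succ A) hs' st))" for hs'
  proof (rule fold_invariant[where P = "\<lambda>st. no_justified_envy \<rho> succ A (fst st)" and Q = "\<lambda>_. True"])
    show "no_justified_envy \<rho> succ A (fst st)"
      using assms unfolding sr by simp
  qed (simp_all add: no_justified_envy_process_type)
  then show ?thesis
    unfolding sr hier_step_def Let_def by simp
qed

lemma no_justified_envy_hier_loop:
  assumes "no_justified_envy \<rho> succ A (fst (fst sr))"
  shows "no_justified_envy \<rho> succ A (hier_loop n I \<rho> hs succ A sr)"
  using assms
proof (induction n arbitrary: sr)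
  case (Suc n)
  obtain C q k R where sr: "sr = ((C, q, k), R)"
    by (cases sr) auto
  have C: "no_justified_envy \<rho> succ A C"
    using Suc.prems sr by simp
  have "no_justified_envy \<rho> succ A (C \<union> top succ q (A - C))"
    by (rule no_justified_envy_top[OF C])
  moreover have "no_justified_envy \<rho> succ A (hier_loop n I \<rho> hs succ A (hier_step I \<rho> hs succ A sr))"
    by (rule Suc.IH[OF no_justified_envy_hier_step[OF Suc.prems]])
  ultimately show ?case
    using C by (simp add: sr)
qed simp

lemma choice_h_no_justified_envy:
  "no_justified_envy \<rho> succ A (choice_h I \<rho> hs succ q \<kappa> A)"
proof -
  have empty: "no_justified_envy \<rho> succ A {}"
    by (simp add: no_justified_envy_def)
  have "no_justified_envy \<rho> succ A (top succ q A)"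
    using no_justified_envy_top[OF empty, of q] by simp
  moreover have "no_justified_envy \<rho> succ A (hier_loop (Suc (length hs)) I \<rho> hs succ A
      (hier_step I \<rho> hs succ A (({}, q, \<kappa>), set hs)))"
    by (rule no_justified_envy_hier_loop[OF no_justified_envy_hier_step]) (simp add: empty)
  ultimately show ?thesis
    unfolding choice_h_def by (simp del: hier_loop.simps)
qed

end

text \<open>The state (D, Z) of the aggregate rule holds the individuals chosen so far and their
  contracts.\<close>

definition agg_envy_free ::
  "('i \<Rightarrow> 'h set) \<Rightarrow> ('i \<Rightarrow> 'i \<Rightarrow> bool) \<Rightarrow> 's \<Rightarrow> ('i, 's) contract set
   \<Rightarrow> 'i set \<times> ('i, 's) contract set \<Rightarrow> bool" where
  "agg_envy_free \<rho> succ s Y DZ \<longleftrightarrow> fst DZ = ind ` snd DZ \<and>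
     (\<forall>y\<in>snd DZ. \<forall>i. (i, s, cat y) \<in> Y \<longrightarrow> i \<notin> fst DZ \<longrightarrow> \<rho> (ind y) \<subseteq> \<rho> i \<longrightarrow> succ (ind y) i)"

lemma agg_envy_free_agg_step:
  assumes ranking: "strict_ranking I (succ s)" and "finite I" and Y: "ind ` Y \<subseteq> I"
    and inv: "agg_envy_free \<rho> (succ s) s Y DZ"
  shows "agg_envy_free \<rho> (succ s) s Y (agg_step I \<rho> hs succ q \<kappa> s Y v DZ)"
proof -
  obtain D Z where DZ: "DZ = (D, Z)"
    by (cases DZ)
  define A where "A = {i. (i, s, v) \<in> Y} - D"
  define Ch where "Ch = choice_h I \<rho> hs (succ s) (q s v) (\<kappa> s v) A"
  have "A \<subseteq> I"
    using Y unfolding A_def ind_def by force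
  moreover have "finite A"
    using \<open>A \<subseteq> I\<close> \<open>finite I\<close> by (rule finite_subset)
  ultimately have fair: "no_justified_envy \<rho> (succ s) A Ch"
    unfolding Ch_def using ranking by (intro choice_h_no_justified_envy)
  have step: "agg_step I \<rho> hs succ q \<kappa> s Y v DZ = (D \<union> Ch, Z \<union> (\<lambda>i. (i, s, v)) ` Ch)"
    unfolding DZ agg_step_def Let_def A_def Ch_def by auto
  have "agg_envy_free \<rho> (succ s) s Y (D \<union> Ch, Z \<union> (\<lambda>i. (i, s, v)) ` Ch)"
    unfolding agg_envy_free_def fst_conv snd_conv
  proof (intro conjI ballI allI impI)
    show "D \<union> Ch = ind ` (Z \<union> (\<lambda>i. (i, s, v)) ` Ch)"
      using inv by (simp add: DZ agg_envy_free_def image_Un image_image ind_def)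
  next
    fix y i
    assume y: "y \<in> Z \<union> (\<lambda>i. (i, s, v)) ` Ch" and i: "(i, s, cat y) \<in> Y" "i \<notin> D \<union> Ch"
      and types: "\<rho> (ind y) \<subseteq> \<rho> i"
    from y consider "y \<in> Z" | j where "j \<in> Ch" "y = (j, s, v)"
      by blast
    then show "succ s (ind y) i"
    proof cases
      case 1
      then show ?thesis
        using inv i types unfolding DZ agg_envy_free_def by simp
    next
      case 2
      then have "i \<in> A - Ch"
        using i unfolding A_def by (simp add: cat_def)
      then show ?thesis
        using fair 2 types unfolding no_justified_envy_def by (simp add: ind_def)
    qed
  qed
  then show ?thesis
    unfolding step .
qed

lemma agg_choice_no_justified_envy:
  assumes "strict_ranking I (succ s)" "finite I" "ind ` Y \<subseteq> I"
    and "x \<in> Y" "inst x = s" "ind x \<notin> ind ` agg_choice I \<rho> hs succ q \<kappa> s Y"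
    and "y \<in> agg_choice I \<rho> hs succ q \<kappa> s Y" "cat x = cat y" "\<rho> (ind y) \<subseteq> \<rho> (ind x)"
  shows "succ s (ind y) (ind x)"
proof -
  obtain D Z where DZ: "fold (agg_step I \<rho> hs succ q \<kappa> s Y) cat_order ({}, {}) = (D, Z)"
    by fastforce
  have "agg_envy_free \<rho> (succ s) s Y (D, Z)"
    unfolding DZ[symmetric]
  proof (rule fold_invariant[where Q = "\<lambda>_. True"])
    show "agg_envy_free \<rho> (succ s) s Y ({}, {})"
      by (simp add: agg_envy_free_def)
  qed (use agg_envy_free_agg_step[where succ = succ and s = s, OF assms(1-3)] in simp_all)
  moreover have "Z = agg_choice I \<rho> hs succ q \<kappa> s Y"
    unfolding agg_choice_def DZ by simp
  moreover have "x = (ind x, s, cat y)"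
    using assms(5,8) by (cases x) (simp add: ind_def inst_def cat_def)
  ultimately show ?thesis
    using assms(4,6,7,9) unfolding agg_envy_free_def by simp
qed

lemma ind_contracts_subset: "ind ` contracts I S t \<subseteq> I"
  by (auto simp: contracts_def ind_def)

theorem theorem2:
  fixes I :: "'i set" and S :: "'s set" and t :: "'i \<Rightarrow> vmem"
    and succ :: "'s \<Rightarrow> 'i \<Rightarrow> 'i \<Rightarrow> bool"
    and q :: "'s \<Rightarrow> pos \<Rightarrow> nat"
    and hs :: "'h list" and \<rho> :: "'i \<Rightarrow> 'h set"
    and \<kappa> :: "'s \<Rightarrow> pos \<Rightarrow> 'h \<Rightarrow> nat"
  assumes "finite I" and "finite S" and "distinct hs"
    and "\<forall>s\<in>S. strict_ranking I (succ s)"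
    and "\<forall>i\<in>I. \<rho> i \<subseteq> set hs"
    and "hierarchical I \<rho> (set hs)"
  shows "\<forall>s\<in>S. \<forall>Y. Y \<subseteq> contracts I S t \<longrightarrow>
           (\<forall>x\<in>Y. inst x = s \<longrightarrow> ind x \<notin> ind ` agg_choice I \<rho> hs succ q \<kappa> s Y \<longrightarrow>
              (\<forall>y\<in>agg_choice I \<rho> hs succ q \<kappa> s Y.
                 succ s (ind y) (ind x) \<or> cat x \<noteq> cat y \<or> \<rho> (ind y) - \<rho> (ind x) \<noteq> {}))"
proof (intro ballI allI impI)
  fix s Y x y
  assume "s \<in> S" and Y: "Y \<subseteq> contracts I S t" and x: "x \<in> Y" "inst x = s"
    "ind x \<notin> ind ` agg_choice I \<rho> hs succ q \<kappa> s Y" and y: "y \<in> agg_choice I \<rho> hs succ q \<kappa> s Y"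
  have ranking: "strict_ranking I (succ s)"
    using assms(4) \<open>s \<in> S\<close> by blast
  have "ind ` Y \<subseteq> I"
    using image_mono[OF Y] ind_contracts_subset by (rule subset_trans)
  from agg_choice_no_justified_envy[OF ranking \<open>finite I\<close> this x y]
  show "succ s (ind y) (ind x) \<or> cat x \<noteq> cat y \<or> \<rho> (ind y) - \<rho> (ind x) \<noteq> {}"
    by blast
qed

end
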